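(* For every $M\in\mathrm{Mat}_3(\mathbb C)$, $M^{\otimes d}=M\otimes M\otimes\cdots\otimes M\in\mathcal T$ (under the identification $\mathrm{Mat}_X(\mathbb C)=\mathrm{Mat}_3(\mathbb C)^{\otimes d}$ below).
   Context: Let $d\ge1$, $\mathbb F_3=\{0,1,2\}$ and $X=\mathbb F_3^d$. The Hamming digraph $H^*(d,3)$ has vertex set $X$, with an arc from $y$ to $z$ iff $y$ and $z$ differ in exactly one coordinate $i$ and $z_i=y_i+1$ in $\mathbb F_3$. Let $V=\mathbb C^X$ with basis $\{\hat y\}$. The adjacency matrix $A\in\mathrm{Mat}_X(\mathbb C)$ has $(y,z)$-entry $1$ iff there is an arc from $y$ to $z$. For integers $s,t$, $E^*_{[s,t]}$ is the diagonal matrix whose $(y,y)$-entry is $1$ if $y$ has exactly $s$ ones and $t$ twos, and $0$ otherwise. The Terwilliger algebra $\mathcal T$ is the subalgebra of $\mathrm{Mat}_X(\mathbb C)$ generated by $A$, $A^\top$ and all $E^*_{[s,t]}$. With $e_0,e_1,e_2$ the standard basis of $\mathbb C^3$, identify $V$ with $(\mathbb C^3)^{\otimes d}$ via $\hat y\mapsto e_{y_1}\otimes\cdots\otimes e_{y_d}$, and hence $\mathrm{Mat}_X(\mathbb C)$ with $\mathrm{Mat}_3(\mathbb C)^{\otimes d}$. *)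

theory Defs
  imports Main "HOL-Library.Complex_Order" Complex_Main
begin

definition verts :: "nat \<Rightarrow> nat list set" where
  "verts d = {y. length y = d \<and> set y \<subseteq> {0,1,2}}"

text \<open>Matrices indexed by X are functions X x X -> complex, taken to be 0 outside X x X.\<close>
type_synonym mat = "nat list \<Rightarrow> nat list \<Rightarrow> complex"

definition arc :: "nat \<Rightarrow> nat list \<Rightarrow> nat list \<Rightarrow> bool" where
  "arc d y z \<longleftrightarrow> y \<in> verts d \<and> z \<in> verts d \<and>
     (\<exists>i<d. z ! i = (y ! i + 1) mod 3 \<and> (\<forall>j<d. j \<noteq> i \<longrightarrow> z ! j = y ! j))"

definition adjA :: "nat \<Rightarrow> mat" where
  "adjA d = (\<lambda>y z. if arc d y z then 1 else 0)"

definition adjAT :: "nat \<Rightarrow> mat" where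
  "adjAT d = (\<lambda>y z. adjA d z y)"

definition Estar :: "nat \<Rightarrow> nat \<Rightarrow> nat \<Rightarrow> mat" where
  "Estar d s t = (\<lambda>y z. if y \<in> verts d \<and> z = y \<and> count_list y 1 = s \<and> count_list y 2 = t
                        then 1 else 0)"

definition idm :: "nat \<Rightarrow> mat" where
  "idm d = (\<lambda>y z. if y \<in> verts d \<and> z = y then 1 else 0)"

definition mmult :: "nat \<Rightarrow> mat \<Rightarrow> mat \<Rightarrow> mat" where
  "mmult d P Q = (\<lambda>y z. \<Sum>w\<in>verts d. P y w * Q w z)"

inductive_set terw :: "nat \<Rightarrow> mat set" for d :: nat where
  gen_A: "adjA d \<in> terw d"
| gen_AT: "adjAT d \<in> terw d"
| gen_E: "Estar d s t \<in> terw d"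
| gen_I: "idm d \<in> terw d"
| add: "P \<in> terw d \<Longrightarrow> Q \<in> terw d \<Longrightarrow> (\<lambda>y z. P y z + Q y z) \<in> terw d"
| smult: "P \<in> terw d \<Longrightarrow> (\<lambda>y z. c * P y z) \<in> terw d"
| mult: "P \<in> terw d \<Longrightarrow> Q \<in> terw d \<Longrightarrow> mmult d P Q \<in> terw d"

text \<open>M^{\<otimes>d} under the identification hat y = e_{y_1} \<otimes> ... \<otimes> e_{y_d};
  M is a 3x3 complex matrix with entries M i j for i, j in {0,1,2}.\<close>
definition tensor_pow :: "nat \<Rightarrow> (nat \<Rightarrow> nat \<Rightarrow> complex) \<Rightarrow> mat" where
  "tensor_pow d M = (\<lambda>y z. if y \<in> verts d \<and> z \<in> verts d
                           then (\<Prod>i<d. M (y ! i) (z ! i)) else 0)"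

end

(*
  For a 3x3 matrix b let Delta(b) = sum_i 1 (x) ... (x) b (x) ... (x) 1, with b in position i
  (lie_action). Delta is linear and Delta([b, c]) = [Delta b, Delta c], so the b with
  Delta b in T form a Lie subalgebra of gl_3. It contains the diagonal units E_aa, because
  Delta(E_aa) is diagonal with entries counting the letter a and hence a combination of the
  E*_[s,t]; and it contains the cyclic permutation matrix P and its transpose, because
  Delta(P) = A. Commutators with E_rr cut out rows, which produces every matrix unit, so
  Delta(b) is in T for all b.
  Now let e_k = sum_{|S| = k} M^(S), with M on the sites in S and 1 elsewhere, and G_k(b) the
  same sum with b placed at one further site. Then G_0(b) = Delta(b), G_k(M) = (k+1) e_(k+1)
  and e_(k+1) Delta(b) = G_(k+1)(b) + G_k(M b), so induction on k puts every G_k(b) in T,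
  and e_d = M^(x)d.
*)
theory Submission
  imports Defs
begin

type_synonym mat3 = "nat \<Rightarrow> nat \<Rightarrow> complex"

lemma length_verts: "y \<in> verts d \<Longrightarrow> length y = d"
  by (simp add: verts_def)

lemma verts_nth_less3: "y \<in> verts d \<Longrightarrow> i < d \<Longrightarrow> y ! i < 3"
  unfolding verts_def using nth_mem by fastforce

lemma verts_eqI: "y \<in> verts d \<Longrightarrow> z \<in> verts d \<Longrightarrow> (\<And>i. i < d \<Longrightarrow> y ! i = z ! i) \<Longrightarrow> y = z"
  unfolding verts_def by (auto intro: nth_equalityI)

lemma verts_Suc: "verts (Suc d) = (\<lambda>(k, w). k # w) ` ({..<3} \<times> verts d)"
proof (rule set_eqI, rule iffI)
  fix y assume "y \<in> verts (Suc d)"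
  then obtain k w where "y = k # w" "length w = d" "set (k # w) \<subseteq> {0,1,2}"
    unfolding verts_def by (cases y) auto
  thus "y \<in> (\<lambda>(k, w). k # w) ` ({..<3} \<times> verts d)"
    unfolding verts_def by (auto intro!: image_eqI[of _ _ "(k, w)"])
qed (auto simp: verts_def)

lemma sum_verts_prod:
  "(\<Sum>w\<in>verts d. \<Prod>i<d. f i (w ! i)) = (\<Prod>i<d. \<Sum>k<3. (f i k :: complex))"
proof (induction d arbitrary: f)
  case 0
  have "verts 0 = {[]}" unfolding verts_def by auto
  thus ?case by simp
next
  case (Suc d)
  have inj: "inj_on (\<lambda>(k, w). k # w) ({..<3::nat} \<times> verts d)" by (auto simp: inj_on_def)
  have "(\<Sum>w\<in>verts (Suc d). \<Prod>i<Suc d. f i (w ! i))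
      = (\<Sum>x\<in>{..<3} \<times> verts d. (\<lambda>w. \<Prod>i<Suc d. f i (w ! i)) ((\<lambda>(k, w). k # w) x))"
    unfolding verts_Suc by (simp add: sum.reindex[OF inj] comp_def)
  also have "\<dots> = (\<Sum>k<3. \<Sum>w\<in>verts d. f 0 k * (\<Prod>i<d. f (Suc i) (w ! i)))"
    by (simp add: sum.cartesian_product case_prod_beta prod.lessThan_Suc_shift del: prod.lessThan_Suc)
  also have "\<dots> = (\<Sum>k<3. f 0 k * (\<Prod>i<d. \<Sum>k<3. f (Suc i) k))"
    using Suc.IH[of "\<lambda>i. f (Suc i)"] by (simp add: sum_distrib_left[symmetric])
  also have "\<dots> = (\<Prod>i<Suc d. \<Sum>k<3. f i k)"
    by (simp add: prod.lessThan_Suc_shift sum_distrib_right del: prod.lessThan_Suc)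
  finally show ?case .
qed

lemma less3_cases: "(p::nat) < 3 \<longleftrightarrow> p = 0 \<or> p = 1 \<or> p = 2"
  by auto

lemma sum_less3: "(\<Sum>k<(3::nat). f k) = f 0 + f 1 + (f 2 :: 'a::comm_monoid_add)"
  by (simp add: numeral_3_eq_3 numeral_2_eq_2 add.commute add.left_commute)

definition id3 :: mat3 where
  "id3 = (\<lambda>p q. if p = q then 1 else 0)"

definition unit3 :: "nat \<Rightarrow> nat \<Rightarrow> mat3" where
  "unit3 r s = (\<lambda>p q. if p = r \<and> q = s then 1 else 0)"

definition mult3 :: "mat3 \<Rightarrow> mat3 \<Rightarrow> mat3" where
  "mult3 x w = (\<lambda>p q. \<Sum>k<3. x p k * w k q)"

definition bracket3 :: "mat3 \<Rightarrow> mat3 \<Rightarrow> mat3" where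
  "bracket3 x w = (\<lambda>p q. mult3 x w p q - mult3 w x p q)"

lemma mult3_id3_left: "p < 3 \<Longrightarrow> mult3 id3 x p q = x p q"
  unfolding mult3_def id3_def sum_less3 less3_cases by auto

lemma mult3_id3_right: "q < 3 \<Longrightarrow> mult3 x id3 p q = x p q"
  unfolding mult3_def id3_def sum_less3 less3_cases by auto

lemma mult3_unit3_left: "r < 3 \<Longrightarrow> mult3 (unit3 r r) x p q = (if p = r then x p q else 0)"
  unfolding mult3_def unit3_def sum_less3 less3_cases by auto

lemma mult3_unit3_right: "r < 3 \<Longrightarrow> mult3 x (unit3 r r) p q = (if q = r then x p q else 0)"
  unfolding mult3_def unit3_def sum_less3 less3_cases by auto

definition tensor_prod :: "nat \<Rightarrow> (nat \<Rightarrow> mat3) \<Rightarrow> mat" where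
  "tensor_prod d c = (\<lambda>y z. if y \<in> verts d \<and> z \<in> verts d then \<Prod>i<d. c i (y ! i) (z ! i) else 0)"

lemma tensor_pow_eq_tensor_prod: "tensor_pow d M = tensor_prod d (\<lambda>_. M)"
  unfolding tensor_pow_def tensor_prod_def ..

lemma tensor_prod_cong:
  "(\<And>i p q. i < d \<Longrightarrow> p < 3 \<Longrightarrow> q < 3 \<Longrightarrow> c i p q = c' i p q) \<Longrightarrow> tensor_prod d c = tensor_prod d c'"
  unfolding tensor_prod_def by (intro ext) (auto intro!: prod.cong simp: verts_nth_less3)

lemma mmult_tensor_prod:
  "mmult d (tensor_prod d c) (tensor_prod d c') = tensor_prod d (\<lambda>i. mult3 (c i) (c' i))"
proof (intro ext)
  fix y z
  show "mmult d (tensor_prod d c) (tensor_prod d c') y z = tensor_prod d (\<lambda>i. mult3 (c i) (c' i)) y z"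
  proof (cases "y \<in> verts d \<and> z \<in> verts d")
    case True
    have "mmult d (tensor_prod d c) (tensor_prod d c') y z
        = (\<Sum>w\<in>verts d. \<Prod>i<d. c i (y ! i) (w ! i) * c' i (w ! i) (z ! i))"
      unfolding mmult_def tensor_prod_def using True by (simp add: prod.distrib)
    also have "\<dots> = (\<Prod>i<d. \<Sum>k<3. c i (y ! i) k * c' i k (z ! i))"
      by (rule sum_verts_prod)
    finally show ?thesis using True by (simp add: tensor_prod_def mult3_def)
  qed (auto simp: mmult_def tensor_prod_def)
qed

lemma mmult_sum_sum:
  "mmult d (\<lambda>y z. \<Sum>u\<in>A. F u y z) (\<lambda>y z. \<Sum>v\<in>B. G v y z) y z
     = (\<Sum>u\<in>A. \<Sum>v\<in>B. mmult d (F u) (G v) y z)"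
  unfolding mmult_def sum_product
  by (subst sum.swap, rule sum.cong[OF refl], rule sum.swap)

lemma terw_cong: "P \<in> terw d \<Longrightarrow> (\<And>y z. P y z = Q y z) \<Longrightarrow> Q \<in> terw d"
proof -
  assume "P \<in> terw d" "\<And>y z. P y z = Q y z"
  then have "P = Q" by (intro ext) auto
  thus ?thesis using \<open>P \<in> terw d\<close> by simp
qed

lemma terw_lincomb: "P \<in> terw d \<Longrightarrow> Q \<in> terw d \<Longrightarrow> (\<lambda>y z. a * P y z + b * Q y z) \<in> terw d"
  by (intro terw.add terw.smult)

lemma terw_sum:
  "finite A \<Longrightarrow> (\<And>u. u \<in> A \<Longrightarrow> F u \<in> terw d) \<Longrightarrow> (\<lambda>y z. \<Sum>u\<in>A. F u y z) \<in> terw d"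
proof (induction A rule: finite_induct)
  case empty
  show ?case using terw.smult[OF terw.gen_I, where c=0 and d=d] by simp
next
  case (insert u A)
  have "(\<lambda>y z. F u y z + (\<lambda>y z. \<Sum>u\<in>A. F u y z) y z) \<in> terw d"
    using insert by (intro terw.add) auto
  thus ?case using insert by simp
qed

definition at_site :: "nat \<Rightarrow> mat3 \<Rightarrow> nat \<Rightarrow> mat3" where
  "at_site i b = (\<lambda>l. if l = i then b else id3)"

definition lie_action :: "nat \<Rightarrow> mat3 \<Rightarrow> mat" where
  "lie_action d b = (\<lambda>y z. \<Sum>i<d. tensor_prod d (at_site i b) y z)"

definition agree_off :: "nat \<Rightarrow> nat \<Rightarrow> nat list \<Rightarrow> nat list \<Rightarrow> bool" where
  "agree_off d i y z \<longleftrightarrow> (\<forall>l<d. l \<noteq> i \<longrightarrow> y ! l = z ! l)"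

lemma prod_indicator:
  "finite A \<Longrightarrow> (\<Prod>x\<in>A. if Q x then 1 else 0) = (if \<forall>x\<in>A. Q x then 1 else (0::'a::comm_semiring_1))"
  by (induction A rule: finite_induct) auto

lemma tensor_prod_at_site:
  assumes "i < d"
  shows "tensor_prod d (at_site i b) y z
    = (if y \<in> verts d \<and> z \<in> verts d \<and> agree_off d i y z then b (y ! i) (z ! i) else 0)"
proof -
  have "(\<Prod>l\<in>{..<d} - {i}. id3 (y ! l) (z ! l)) = (if agree_off d i y z then 1 else 0)"
    unfolding id3_def agree_off_def by (subst prod_indicator) auto
  thus ?thesis
    using assms unfolding tensor_prod_def by (simp add: prod.remove[of "{..<d}" i] at_site_def)
qed

lemma lie_action_eq: "lie_action d b y z = (if y \<in> verts d \<and> z \<in> verts d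
    then \<Sum>i<d. if agree_off d i y z then b (y ! i) (z ! i) else 0 else 0)"
  unfolding lie_action_def by (auto simp: tensor_prod_at_site intro!: sum.cong)

lemma lie_action_lincomb:
  "lie_action d (\<lambda>p q. a * x p q + b * w p q) y z = a * lie_action d x y z + b * lie_action d w y z"
  unfolding lie_action_eq by (auto simp: sum_distrib_left sum.distrib[symmetric] intro!: sum.cong)

lemma lie_action_sum:
  "lie_action d (\<lambda>p q. \<Sum>u\<in>A. f u p q) y z = (\<Sum>u\<in>A. lie_action d (f u) y z)"
proof -
  have "(if P then \<Sum>u\<in>A. g u else 0) = (\<Sum>u\<in>A. if P then g u else (0::complex))" for P g
    by simp
  thus ?thesis
    unfolding lie_action_eq by (cases "y \<in> verts d \<and> z \<in> verts d") (auto simp: sum.swap[of _ "{..<d}"])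
qed

lemma lie_action_cong:
  "(\<And>p q. p < 3 \<Longrightarrow> q < 3 \<Longrightarrow> x p q = w p q) \<Longrightarrow> lie_action d x = lie_action d w"
  by (intro ext, simp only: lie_action_eq) (auto intro!: sum.cong simp: verts_nth_less3)

lemma lie_action_transpose: "lie_action d (\<lambda>p q. b q p) y z = lie_action d b z y"
  unfolding lie_action_eq agree_off_def by (auto intro!: sum.cong)

lemma lie_action_bracket:
  "lie_action d (bracket3 x w) y z
     = mmult d (lie_action d x) (lie_action d w) y z - mmult d (lie_action d w) (lie_action d x) y z"
proof -
  define F where "F x w i j = tensor_prod d (\<lambda>l. mult3 (at_site i x l) (at_site j w l)) y z" for x w i j
  have product: "mmult d (lie_action d x) (lie_action d w) y z = (\<Sum>i<d. \<Sum>j<d. F x w i j)" for x w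
    unfolding lie_action_def mmult_sum_sum mmult_tensor_prod F_def ..
  have commute: "F x w i j = F w x j i" if "i \<noteq> j" for i j
    unfolding F_def
    by (rule arg_cong[where f="\<lambda>T. T y z"], rule tensor_prod_cong)
       (use that in \<open>auto simp: at_site_def mult3_id3_left mult3_id3_right\<close>)
  have diagonal: "F x w i i = tensor_prod d (at_site i (mult3 x w)) y z" for x w i
    unfolding F_def
    by (rule arg_cong[where f="\<lambda>T. T y z"], rule tensor_prod_cong) (auto simp: at_site_def mult3_id3_left)
  have "mmult d (lie_action d x) (lie_action d w) y z - mmult d (lie_action d w) (lie_action d x) y z
      = (\<Sum>i<d. \<Sum>j<d. F x w i j - F w x j i)"
    unfolding product by (subst sum.swap[of _ "{..<d}" "{..<d}"]) (simp only: sum_subtractf)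
  also have "\<dots> = (\<Sum>i<d. F x w i i - F w x i i)"
  proof (rule sum.cong[OF refl])
    fix i assume i: "i \<in> {..<d}"
    have "(\<Sum>j\<in>{..<d} - {i}. F x w i j - F w x j i) = 0"
      by (rule sum.neutral) (auto simp: commute)
    thus "(\<Sum>j<d. F x w i j - F w x j i) = F x w i i - F w x i i"
      using i by (simp add: sum.remove)
  qed
  also have "\<dots> = lie_action d (bracket3 x w) y z"
    unfolding diagonal lie_action_def bracket3_def
    using lie_action_lincomb[of d 1 "mult3 x w" "-1" "mult3 w x" y z]
    by (simp add: sum_subtractf lie_action_def)
  finally show ?thesis by simp
qed

definition lie_terw :: "nat \<Rightarrow> mat3 set" where
  "lie_terw d = {b. lie_action d b \<in> terw d}"

lemma lie_terw_lincomb: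
  "x \<in> lie_terw d \<Longrightarrow> w \<in> lie_terw d \<Longrightarrow> (\<lambda>p q. a * x p q + b * w p q) \<in> lie_terw d"
  unfolding lie_terw_def mem_Collect_eq
  by (rule terw_cong[OF terw_lincomb[of "lie_action d x" d "lie_action d w" a b]])
     (simp_all add: lie_action_lincomb)

lemma lie_terw_sum:
  "finite A \<Longrightarrow> (\<And>u. u \<in> A \<Longrightarrow> f u \<in> lie_terw d) \<Longrightarrow> (\<lambda>p q. \<Sum>u\<in>A. f u p q) \<in> lie_terw d"
  unfolding lie_terw_def mem_Collect_eq
  by (rule terw_cong[OF terw_sum[of A "\<lambda>u. lie_action d (f u)" d]]) (simp_all add: lie_action_sum)

lemma lie_terw_cong:
  "x \<in> lie_terw d \<Longrightarrow> (\<And>p q. p < 3 \<Longrightarrow> q < 3 \<Longrightarrow> x p q = w p q) \<Longrightarrow> w \<in> lie_terw d"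
  unfolding lie_terw_def using lie_action_cong[of x w d] by simp

lemma lie_terw_bracket: "x \<in> lie_terw d \<Longrightarrow> w \<in> lie_terw d \<Longrightarrow> bracket3 x w \<in> lie_terw d"
  unfolding lie_terw_def mem_Collect_eq
  by (rule terw_cong[OF terw_lincomb[OF terw.mult terw.mult, where a=1 and b="-1"]])
     (simp_all add: lie_action_bracket)

lemma of_nat_count_list_conv_sum:
  "of_nat (count_list ys a) = (\<Sum>i<length ys. if ys ! i = a then 1 else 0 :: 'b::semiring_1)"
proof (induction ys)
  case (Cons x xs)
  have "(\<Sum>i<length (x # xs). if (x # xs) ! i = a then 1 else 0 :: 'b)
      = (if x = a then 1 else 0) + (\<Sum>i<length xs. if xs ! i = a then 1 else 0)"
    by (subst length_Cons, subst sum.lessThan_Suc_shift) simp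
  then show ?case using Cons by simp
qed simp

lemma count_list_verts:
  assumes "y \<in> verts d" "a < 3"
  shows "count_list y a = [d - count_list y 1 - count_list y 2, count_list y 1, count_list y 2] ! a"
proof -
  have "set y \<subseteq> {0,1,2} \<Longrightarrow> count_list y 0 + count_list y 1 + count_list y 2 = length y"
    by (induction y) auto
  thus ?thesis using assms unfolding verts_def less3_cases by auto
qed

lemma lie_action_unit3_diag:
  "lie_action d (unit3 a a) y z = (if y \<in> verts d \<and> z = y then of_nat (count_list y a) else 0)"
proof (cases "y \<in> verts d \<and> z \<in> verts d")
  case True
  have "(\<Sum>i<d. if agree_off d i y z then unit3 a a (y ! i) (z ! i) else 0)
      = (if z = y then of_nat (count_list y a) else 0)"
  proof (cases "z = y")
    case True
    thus ?thesis using \<open>y \<in> verts d \<and> z \<in> verts d\<close>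
      by (simp add: agree_off_def unit3_def of_nat_count_list_conv_sum length_verts)
  next
    case False
    have "y = z" if "agree_off d i y z" "y ! i = z ! i" for i
      using True that unfolding agree_off_def by (metis verts_eqI)
    thus ?thesis using False by (auto simp: unit3_def intro!: sum.neutral) metis
  qed
  thus ?thesis using True by (simp add: lie_action_eq)
qed (auto simp: lie_action_eq)

lemma weight_in_terw:
  "(\<lambda>y z. if y \<in> verts d \<and> z = y then f (count_list y 1) (count_list y 2) else 0) \<in> terw d"
proof (rule terw_cong)
  show "(\<lambda>y z. \<Sum>s\<le>d. \<Sum>t\<le>d. f s t * Estar d s t y z) \<in> terw d"
    by (intro terw_sum terw.smult terw.gen_E) auto
next
  fix y z :: "nat list"
  show "(\<Sum>s\<le>d. \<Sum>t\<le>d. f s t * Estar d s t y z)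
      = (if y \<in> verts d \<and> z = y then f (count_list y 1) (count_list y 2) else 0)"
  proof (cases "y \<in> verts d \<and> z = y")
    case True
    have entry: "f s t * Estar d s t y y
        = (if t = count_list y 2 then if s = count_list y 1 then f s t else 0 else 0)" for s t
      using True by (auto simp: Estar_def)
    have "count_list y 1 \<le> d" "count_list y 2 \<le> d"
      using True count_le_length length_verts by metis+
    thus ?thesis using True by (simp only: entry) (simp add: sum.delta)
  qed (auto simp: Estar_def)
qed

lemma unit3_diag_in_lie_terw: "a < 3 \<Longrightarrow> unit3 a a \<in> lie_terw d"
  unfolding lie_terw_def mem_Collect_eq
  by (rule terw_cong[OF weight_in_terw[where f="\<lambda>s t. of_nat ([d - s - t, s, t] ! a)"]])
     (auto simp: lie_action_unit3_diag count_list_verts[of _ d a])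

definition cyc3 :: mat3 where
  "cyc3 = (\<lambda>p q. if p < 3 \<and> q = (p + 1) mod 3 then 1 else 0)"

lemma sum_indicator_unique:
  assumes "finite A" and "\<And>i j. i \<in> A \<Longrightarrow> j \<in> A \<Longrightarrow> Q i \<Longrightarrow> Q j \<Longrightarrow> i = j"
  shows "(\<Sum>i\<in>A. if Q i then 1 else 0) = (if \<exists>i\<in>A. Q i then 1 else (0::'a::semiring_1))"
proof (cases "\<exists>i\<in>A. Q i")
  case True
  then obtain i where i: "i \<in> A" "Q i" by blast
  with assms(2) have "{j \<in> A. Q j} = {i}" by blast
  thus ?thesis using True sum.inter_filter[OF assms(1), of "\<lambda>_. 1" Q] by simp
qed simp

lemma adjA_eq_lie_action: "adjA d = lie_action d cyc3"
proof (intro ext)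
  fix y z
  show "adjA d y z = lie_action d cyc3 y z"
  proof (cases "y \<in> verts d \<and> z \<in> verts d")
    case True
    define Q where "Q i \<longleftrightarrow> agree_off d i y z \<and> z ! i = (y ! i + 1) mod 3" for i
    have entry: "(if agree_off d i y z then cyc3 (y ! i) (z ! i) else 0) = (if Q i then 1 else 0)"
      if "i < d" for i
      using verts_nth_less3[of y d i] True that by (simp add: cyc3_def Q_def)
    have unique: "i = j" if "i \<in> {..<d}" "j \<in> {..<d}" "Q i" "Q j" for i j
    proof (rule ccontr)
      assume "i \<noteq> j"
      hence "y ! j = z ! j" using that by (simp add: Q_def agree_off_def)
      moreover have "(y ! j + 1) mod 3 \<noteq> y ! j" by presburger
      ultimately show False using \<open>Q j\<close> by (simp add: Q_def)
    qed
    have "lie_action d cyc3 y z = (\<Sum>i<d. if Q i then 1 else 0)"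
      using True by (simp add: lie_action_eq entry)
    also have "\<dots> = (if \<exists>i\<in>{..<d}. Q i then 1 else 0)"
      using unique by (intro sum_indicator_unique) auto
    also have "(\<exists>i\<in>{..<d}. Q i) \<longleftrightarrow> arc d y z"
      using True unfolding arc_def Q_def agree_off_def by (auto simp: eq_commute[of "z ! _"])
    finally show ?thesis by (simp add: adjA_def)
  next
    case False
    hence "\<not> arc d y z" by (auto simp: arc_def)
    thus ?thesis using False by (auto simp: adjA_def lie_action_eq)
  qed
qed

lemma adjAT_eq_lie_action: "adjAT d = lie_action d (\<lambda>p q. cyc3 q p)"
  by (intro ext) (simp add: adjAT_def adjA_eq_lie_action lie_action_transpose[of d cyc3])

lemma bracket3_unit3_diag:
  "r < 3 \<Longrightarrow> bracket3 (unit3 r r) x p q = (if p = r then x p q else 0) - (if q = r then x p q else 0)"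
  unfolding bracket3_def by (simp add: mult3_unit3_left mult3_unit3_right)

text \<open>The off-diagonal part of row r of x is ([E_rr, x] + [E_rr, [E_rr, x]]) / 2.\<close>
lemma row_in_lie_terw:
  assumes "r < 3" and "x \<in> lie_terw d"
  shows "(\<lambda>p q. if p = r \<and> q \<noteq> r then x p q else 0) \<in> lie_terw d"
proof -
  have "unit3 r r \<in> lie_terw d" using assms(1) by (rule unit3_diag_in_lie_terw)
  hence "bracket3 (unit3 r r) x \<in> lie_terw d" "bracket3 (unit3 r r) (bracket3 (unit3 r r) x) \<in> lie_terw d"
    using assms(2) by (auto intro: lie_terw_bracket)
  from lie_terw_lincomb[OF this, of "1/2" "1/2"] show ?thesis
    by (rule lie_terw_cong) (auto simp: bracket3_unit3_diag assms(1))
qed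

lemma unit3_in_lie_terw:
  assumes "r < 3" "s < 3"
  shows "unit3 r s \<in> lie_terw d"
proof -
  have "s = r \<or> s = (r + 1) mod 3 \<or> r = (s + 1) mod 3"
    using assms unfolding less3_cases by auto
  thus ?thesis
  proof (elim disjE)
    assume "s = r"
    thus ?thesis using assms(1) by (simp add: unit3_diag_in_lie_terw)
  next
    assume s: "s = (r + 1) mod 3"
    have "cyc3 \<in> lie_terw d"
      using terw.gen_A[of d] by (simp add: lie_terw_def adjA_eq_lie_action)
    have "s \<noteq> r" using s by presburger
    have row: "cyc3 r q = (if q = s then 1 else 0)" for q
      using s assms(1) by (simp add: cyc3_def)
    from row_in_lie_terw[OF assms(1) \<open>cyc3 \<in> lie_terw d\<close>] show ?thesis
      by (rule lie_terw_cong) (use \<open>s \<noteq> r\<close> row in \<open>auto simp: unit3_def\<close>)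
  next
    assume r: "r = (s + 1) mod 3"
    have "(\<lambda>p q. cyc3 q p) \<in> lie_terw d"
      using terw.gen_AT[of d] by (simp add: lie_terw_def adjAT_eq_lie_action)
    have "s \<noteq> r" using r by presburger
    have column: "cyc3 q r = (if q = s then 1 else 0)" if "q < 3" for q
      using r that assms(2) unfolding cyc3_def less3_cases by auto
    from row_in_lie_terw[OF assms(1) \<open>(\<lambda>p q. cyc3 q p) \<in> lie_terw d\<close>] show ?thesis
      by (rule lie_terw_cong) (use \<open>s \<noteq> r\<close> column in \<open>auto simp: unit3_def\<close>)
  qed
qed

lemma in_lie_terw: "b \<in> lie_terw d"
proof -
  have entry: "b r s * unit3 r s p q = (if s = q then if r = p then b r s else 0 else 0)" for r s p q
    by (simp add: unit3_def)
  have "(\<lambda>p q. \<Sum>r<3. \<Sum>s<3. b r s * unit3 r s p q) \<in> lie_terw d"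
  proof (intro lie_terw_sum)
    fix r s :: nat assume "r \<in> {..<3}" "s \<in> {..<3}"
    hence "unit3 r s \<in> lie_terw d" by (intro unit3_in_lie_terw) auto
    from lie_terw_lincomb[OF this this, of "b r s" 0]
    show "(\<lambda>p q. b r s * unit3 r s p q) \<in> lie_terw d" by simp
  qed auto
  thus ?thesis by (rule lie_terw_cong) (simp add: entry sum.delta)
qed

lemma lie_action_in_terw: "lie_action d b \<in> terw d"
  using in_lie_terw[of b d] by (simp add: lie_terw_def)

lemma sum_subsets_card_Suc:
  fixes g :: "'a set \<Rightarrow> 'a \<Rightarrow> 'b::comm_monoid_add"
  assumes "finite A"
  shows "(\<Sum>S | S \<subseteq> A \<and> card S = Suc k. \<Sum>i\<in>S. g S i)
       = (\<Sum>S | S \<subseteq> A \<and> card S = k. \<Sum>i\<in>A - S. g (insert i S) i)"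
proof -
  have finite_subsets: "finite {S. S \<subseteq> A \<and> card S = n}" for n
    using assms by (rule finite_subset[rotated, OF finite_Pow_iff[THEN iffD2]]) auto
  have finite_members: "finite S" if "S \<subseteq> A" for S
    using assms that by (rule finite_subset[rotated])
  have bij: "bij_betw (\<lambda>(S, i). (insert i S, i))
      (Sigma {S. S \<subseteq> A \<and> card S = k} (\<lambda>S. A - S)) (Sigma {S. S \<subseteq> A \<and> card S = Suc k} (\<lambda>S. S))"
    by (rule bij_betw_byWitness[where f'="\<lambda>(S, i). (S - {i}, i)"])
       (use finite_members in \<open>auto simp: card_Diff_singleton_if\<close>)
  have "(\<Sum>S | S \<subseteq> A \<and> card S = k. \<Sum>i\<in>A - S. g (insert i S) i)
      = (\<Sum>(S, i)\<in>Sigma {S. S \<subseteq> A \<and> card S = k} (\<lambda>S. A - S). g (insert i S) i)"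
    using assms by (intro sum.Sigma) (auto simp: finite_subsets)
  also have "\<dots> = (\<Sum>(S, i)\<in>Sigma {S. S \<subseteq> A \<and> card S = Suc k} (\<lambda>S. S). g S i)"
    using sum.reindex_bij_betw[OF bij, of "\<lambda>(S, i). g S i"] by (simp add: case_prod_beta)
  also have "\<dots> = (\<Sum>S | S \<subseteq> A \<and> card S = Suc k. \<Sum>i\<in>S. g S i)"
    using finite_members by (intro sum.Sigma[symmetric]) (auto simp: finite_subsets)
  finally show ?thesis ..
qed

definition sym_tensor :: "nat \<Rightarrow> mat3 \<Rightarrow> nat \<Rightarrow> mat" where
  "sym_tensor d a k = (\<lambda>y z. \<Sum>S | S \<subseteq> {..<d} \<and> card S = k.
     tensor_prod d (\<lambda>l. if l \<in> S then a else id3) y z)"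

definition marked_sym_tensor :: "nat \<Rightarrow> mat3 \<Rightarrow> nat \<Rightarrow> mat3 \<Rightarrow> mat" where
  "marked_sym_tensor d a k b = (\<lambda>y z. \<Sum>S | S \<subseteq> {..<d} \<and> card S = k. \<Sum>i\<in>{..<d} - S.
     tensor_prod d (\<lambda>l. if l = i then b else if l \<in> S then a else id3) y z)"

lemma subsets_card_0: "finite A \<Longrightarrow> {S. S \<subseteq> A \<and> card S = 0} = {{}}"
  by (auto dest: finite_subset)

lemma marked_sym_tensor_0: "marked_sym_tensor d a 0 b = lie_action d b"
  unfolding marked_sym_tensor_def lie_action_def subsets_card_0[OF finite_lessThan] at_site_def by (simp cong: if_cong)

lemma marked_sym_tensor_self:
  "marked_sym_tensor d a k a y z = of_nat (Suc k) * sym_tensor d a (Suc k) y z"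
proof -
  have insert: "(\<lambda>l. if l = i then a else if l \<in> S then a else id3) = (\<lambda>l. if l \<in> insert i S then a else id3)"
    for i S by auto
  have "marked_sym_tensor d a k a y z = (\<Sum>S | S \<subseteq> {..<d} \<and> card S = k. \<Sum>i\<in>{..<d} - S.
      tensor_prod d (\<lambda>l. if l \<in> insert i S then a else id3) y z)"
    unfolding marked_sym_tensor_def insert ..
  also have "\<dots> = (\<Sum>S | S \<subseteq> {..<d} \<and> card S = Suc k. \<Sum>i\<in>S.
      tensor_prod d (\<lambda>l. if l \<in> S then a else id3) y z)"
    by (rule sum_subsets_card_Suc[symmetric]) simp
  also have "\<dots> = (\<Sum>S | S \<subseteq> {..<d} \<and> card S = Suc k.
      of_nat (Suc k) * tensor_prod d (\<lambda>l. if l \<in> S then a else id3) y z)"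
    by (intro sum.cong) auto
  finally show ?thesis by (simp add: sym_tensor_def sum_distrib_left)
qed

lemma mmult_sym_tensor_lie_action:
  "mmult d (sym_tensor d a (Suc k)) (lie_action d b) y z
     = marked_sym_tensor d a (Suc k) b y z + marked_sym_tensor d a k (mult3 a b) y z"
proof -
  define T where "T S i = tensor_prod d (\<lambda>l. mult3 (if l \<in> S then a else id3) (at_site i b l)) y z"
    for S i
  define U where "U b' S i = tensor_prod d (\<lambda>l. if l = i then b' else if l \<in> S then a else id3) y z"
    for b' S i
  have split: "(\<Sum>i<d. T S i) = (\<Sum>i\<in>{..<d} - S. U b S i) + (\<Sum>i\<in>S. U (mult3 a b) (S - {i}) i)"
    if "S \<subseteq> {..<d}" for S
  proof -
    have "(\<Sum>i<d. T S i) = (\<Sum>i\<in>{..<d} - S. T S i) + (\<Sum>i\<in>S. T S i)"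
      using that by (simp add: sum.subset_diff)
    moreover have "T S i = U b S i" if "i \<notin> S" for i
      unfolding T_def U_def
      by (rule arg_cong[where f="\<lambda>T. T y z"], rule tensor_prod_cong)
         (use that in \<open>auto simp: at_site_def mult3_id3_left mult3_id3_right\<close>)
    moreover have "T S i = U (mult3 a b) (S - {i}) i" if "i \<in> S" for i
      unfolding T_def U_def
      by (rule arg_cong[where f="\<lambda>T. T y z"], rule tensor_prod_cong)
         (use that in \<open>auto simp: at_site_def mult3_id3_right\<close>)
    ultimately show ?thesis by simp
  qed
  have "mmult d (sym_tensor d a (Suc k)) (lie_action d b) y z
      = (\<Sum>S | S \<subseteq> {..<d} \<and> card S = Suc k. \<Sum>i<d. T S i)"
    unfolding sym_tensor_def lie_action_def mmult_sum_sum mmult_tensor_prod T_def ..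
  also have "\<dots> = marked_sym_tensor d a (Suc k) b y z
      + (\<Sum>S | S \<subseteq> {..<d} \<and> card S = Suc k. \<Sum>i\<in>S. U (mult3 a b) (S - {i}) i)"
    by (simp add: split sum.distrib marked_sym_tensor_def U_def)
  also have "(\<Sum>S | S \<subseteq> {..<d} \<and> card S = Suc k. \<Sum>i\<in>S. U (mult3 a b) (S - {i}) i)
      = (\<Sum>S | S \<subseteq> {..<d} \<and> card S = k. \<Sum>i\<in>{..<d} - S. U (mult3 a b) (insert i S - {i}) i)"
    by (rule sum_subsets_card_Suc) simp
  also have "\<dots> = marked_sym_tensor d a k (mult3 a b) y z"
    unfolding marked_sym_tensor_def U_def by (intro sum.cong refl) (simp cong: if_cong)
  finally show ?thesis .
qed

lemma marked_sym_tensor_in_terw: "marked_sym_tensor d a k b \<in> terw d"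
proof (induction k arbitrary: b)
  case 0
  show ?case
    unfolding marked_sym_tensor_0 by (rule lie_action_in_terw)
next
  case (Suc k)
  have sym: "sym_tensor d a (Suc k) \<in> terw d"
    by (rule terw_cong[OF terw.smult[OF Suc.IH[of a], where c="1 / of_nat (Suc k)"]])
       (simp add: marked_sym_tensor_self del: of_nat_Suc)
  from terw_lincomb[OF terw.mult[OF sym lie_action_in_terw[of d b]] Suc.IH[of "mult3 a b"], of 1 "-1"]
  show ?case
    by (rule terw_cong) (simp add: mmult_sym_tensor_lie_action)
qed

lemma sym_tensor_top: "sym_tensor d a d = tensor_pow d a"
proof -
  have "{S. S \<subseteq> {..<d} \<and> card S = d} = {{..<d}}"
    using card_subset_eq[of "{..<d}"] by auto
  moreover have "tensor_prod d (\<lambda>l. if l \<in> {..<d} then a else id3) = tensor_prod d (\<lambda>_. a)"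
    by (rule tensor_prod_cong) simp
  ultimately show ?thesis
    unfolding sym_tensor_def tensor_pow_eq_tensor_prod by simp
qed

theorem lemma5p5:
  fixes d :: nat and M :: "nat \<Rightarrow> nat \<Rightarrow> complex"
  assumes "d \<ge> 1"
  shows "tensor_pow d M \<in> terw d"
proof -
  obtain k where d: "d = Suc k" using assms by (cases d) auto
  have "(\<lambda>y z. (1 / of_nat d) * marked_sym_tensor d M k M y z) \<in> terw d"
    by (intro terw.smult marked_sym_tensor_in_terw)
  hence "sym_tensor d M d \<in> terw d"
    by (rule terw_cong) (simp add: marked_sym_tensor_self d del: of_nat_Suc)
  thus ?thesis by (simp add: sym_tensor_top)
qed

end
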